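(* Let $A$ be a $\mathbb{C}$-algebra, $Q$ a tropical field, and $X\subset A$ a generating set with presentation $0\to I\to\mathbb{C}[X]\to A\to0$ ($x\mapsto x$). Then the map $\pi_X:\mathbb{V}_Q(A)\to Q^X$, $v\mapsto(v(x))_{x\in X}$, takes values in the tropical variety $\operatorname{tr}_Q(I)$. Moreover the maps $\pi_X$ induce a bijection $\mathbb{V}_Q(A)\cong\varprojlim_{X}\operatorname{tr}_Q(I_X)$, the inverse limit over generating sets $X\subset A$ (ordered by inclusion, with coordinate projections as transition maps).
   Context: A tropical field $Q$ is a totally ordered abelian group (operation written $+$, tropical product $\otimes=+$, tropical sum $\oplus=\max$) with an adjoined least element $-\infty$. A valuation $v:A\to Q$ satisfies $v(ab)=v(a)+v(b)$, $v(a+b)\le\max(v(a),v(b))$, $v(0)=-\infty$, $v(c)=0$ for $c\in\mathbb{C}^\times$; $\mathbb{V}_Q(A)$ denotes the set of these. For $f=\sum_i C_i\vec x^{\vec m_i}\in\mathbb{C}[X]$ with $C_i\ne0$ (coefficients given the trivial valuation), its tropicalization is $T(f)(\vec q)=\max_i\langle\vec m_i,\vec q\rangle$, and $\operatorname{tr}(T(f))\subset Q^X$ is the set of $\vec q$ where this maximum is attained by at least two monomials; $\operatorname{tr}_Q(I)=\bigcap_{f\in I}\operatorname{tr}(T(f))$. *)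

theory Defs
  imports Complex_Main "HOL-Library.Poly_Mapping" "HOL-Library.FuncSet"
begin

section \<open>The tropical field Q = (totally ordered abelian group) + adjoined least element -infinity\<close>

datatype 'q trop = MInf | Fin 'q

instantiation trop :: (linorder) linorder
begin
fun less_eq_trop :: "'a trop \<Rightarrow> 'a trop \<Rightarrow> bool" where
  "less_eq_trop MInf _ = True"
| "less_eq_trop (Fin a) MInf = False"
| "less_eq_trop (Fin a) (Fin b) = (a \<le> b)"
definition less_trop :: "'a trop \<Rightarrow> 'a trop \<Rightarrow> bool" where
  "less_trop x y = (x \<le> y \<and> \<not> y \<le> x)"
instance
proof
  fix x y z :: "'a trop"
  show "(x < y) = (x \<le> y \<and> \<not> y \<le> x)" by (simp add: less_trop_def)
  show "x \<le> x" by (cases x) auto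
  show "x \<le> y \<Longrightarrow> y \<le> z \<Longrightarrow> x \<le> z"
    by (cases x; cases y; cases z) auto
  show "x \<le> y \<Longrightarrow> y \<le> x \<Longrightarrow> x = y"
    by (cases x; cases y) auto
  show "x \<le> y \<or> y \<le> x" by (cases x; cases y) auto
qed
end

text \<open>Tropical product (= the group operation + of Q, with -infinity absorbing),
  written as multiplication on the type of tropical numbers; its unit is Fin 0.\<close>
instantiation trop :: (linordered_ab_group_add) comm_monoid_mult
begin
fun times_trop :: "'a trop \<Rightarrow> 'a trop \<Rightarrow> 'a trop" where
  "times_trop (Fin a) (Fin b) = Fin (a + b)"
| "times_trop _ _ = MInf"
definition one_trop :: "'a trop" where "one_trop = Fin 0"
instance
proof
  fix a b c :: "'a trop"
  show "a * b * c = a * (b * c)"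
    by (cases a; cases b; cases c) (auto simp: add.assoc)
  show "a * b = b * a"
    by (cases a; cases b) (auto simp: add.commute)
  show "1 * a = a"
    by (cases a) (auto simp: one_trop_def)
qed
end

text \<open>Variables are elements of the algebra
  'a; C[X] consists of the polynomials all of whose monomials only involve variables in X.\<close>

type_synonym ('a) cpoly = "('a \<Rightarrow>\<^sub>0 nat) \<Rightarrow>\<^sub>0 complex"

definition polys_in :: "'a set \<Rightarrow> 'a cpoly set" where
  "polys_in X = {p :: 'a cpoly. \<forall>m\<in>Poly_Mapping.keys p. Poly_Mapping.keys m \<subseteq> X}"

text \<open>A C-algebra structure on a commutative ring 'a: a unital ring homomorphism C -> 'a.\<close>
definition calg_hom :: "(complex \<Rightarrow> 'a::comm_ring_1) \<Rightarrow> bool" where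
  "calg_hom \<phi> \<longleftrightarrow> \<phi> 1 = 1 \<and> (\<forall>c d. \<phi> (c + d) = \<phi> c + \<phi> d \<and> \<phi> (c * d) = \<phi> c * \<phi> d)"

definition peval :: "(complex \<Rightarrow> 'a::comm_ring_1) \<Rightarrow> 'a cpoly \<Rightarrow> 'a" where
  "peval \<phi> p = (\<Sum>m\<in>Poly_Mapping.keys p. \<phi> (Poly_Mapping.lookup p m) * (\<Prod>x\<in>Poly_Mapping.keys m. x ^ Poly_Mapping.lookup m x))"

definition generating :: "(complex \<Rightarrow> 'a::comm_ring_1) \<Rightarrow> 'a set \<Rightarrow> bool" where
  "generating \<phi> X \<longleftrightarrow> peval \<phi> ` polys_in X = UNIV"

definition pres_ideal :: "(complex \<Rightarrow> 'a::comm_ring_1) \<Rightarrow> 'a set \<Rightarrow> 'a cpoly set" where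
  "pres_ideal \<phi> X = {p \<in> polys_in X. peval \<phi> p = 0}"

definition valuation :: "(complex \<Rightarrow> 'a::comm_ring_1) \<Rightarrow> ('a \<Rightarrow> 'q::linordered_ab_group_add trop) \<Rightarrow> bool" where
  "valuation \<phi> v \<longleftrightarrow>
     (\<forall>a b. v (a * b) = v a * v b) \<and>
     (\<forall>a b. v (a + b) \<le> max (v a) (v b)) \<and>
     v 0 = MInf \<and>
     (\<forall>c. c \<noteq> 0 \<longrightarrow> v (\<phi> c) = 1)"

definition valuations :: "(complex \<Rightarrow> 'a::comm_ring_1) \<Rightarrow> ('a \<Rightarrow> 'q::linordered_ab_group_add trop) set" where
  "valuations \<phi> = {v. valuation \<phi> v}"

text \<open>The pairing <m, q> = sum_x m_x q_x, computed in the tropical semiring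
  (tropical product of the powers q_x^(m_x)).\<close>
definition tpair :: "('a \<Rightarrow>\<^sub>0 nat) \<Rightarrow> ('a \<Rightarrow> 'q::linordered_ab_group_add trop) \<Rightarrow> 'q trop" where
  "tpair m q = (\<Prod>x\<in>Poly_Mapping.keys m. q x ^ Poly_Mapping.lookup m x)"

text \<open>T(f)(q) = max over the monomials of f of <m_i, q>; for f = 0 (no monomials) this is the
  tropical zero -infinity.\<close>
definition trop_eval :: "'a cpoly \<Rightarrow> ('a \<Rightarrow> 'q::linordered_ab_group_add trop) \<Rightarrow> 'q trop" where
  "trop_eval f q = (if Poly_Mapping.keys f = {} then MInf else Max ((\<lambda>m. tpair m q) ` Poly_Mapping.keys f))"

definition trop_hyp :: "'a cpoly \<Rightarrow> ('a \<Rightarrow> 'q::linordered_ab_group_add trop) set" where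
  "trop_hyp f = {q. trop_eval f q = MInf \<or>
      (\<exists>m1\<in>Poly_Mapping.keys f. \<exists>m2\<in>Poly_Mapping.keys f. m1 \<noteq> m2 \<and>
         tpair m1 q = trop_eval f q \<and> tpair m2 q = trop_eval f q)}"

text \<open>tr_Q(I) as a subset of Q^X, the points of Q^X being the extensional functions on X.\<close>
definition trop_var :: "'a set \<Rightarrow> 'a cpoly set \<Rightarrow> ('a \<Rightarrow> 'q::linordered_ab_group_add trop) set" where
  "trop_var X I = (X \<rightarrow>\<^sub>E UNIV) \<inter> (\<Inter>f\<in>I. trop_hyp f)"

definition piX :: "'a set \<Rightarrow> ('a \<Rightarrow> 'q trop) \<Rightarrow> ('a \<Rightarrow> 'q trop)" where
  "piX X v = restrict v X"

definition gensets :: "(complex \<Rightarrow> 'a::comm_ring_1) \<Rightarrow> 'a set set" where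
  "gensets \<phi> = {X. generating \<phi> X}"

text \<open>Inverse limit of tr_Q(I_X) over generating sets X (ordered by inclusion) with coordinate
  projections Q^Y -> Q^X (X subset Y) as transition maps: compatible families.\<close>
definition inv_lim :: "(complex \<Rightarrow> 'a::comm_ring_1) \<Rightarrow> ('a set \<Rightarrow> 'a \<Rightarrow> 'q::linordered_ab_group_add trop) set" where
  "inv_lim \<phi> = {F \<in> gensets \<phi> \<rightarrow>\<^sub>E UNIV.
      (\<forall>X\<in>gensets \<phi>. F X \<in> trop_var X (pres_ideal \<phi> X)) \<and>
      (\<forall>X\<in>gensets \<phi>. \<forall>Y\<in>gensets \<phi>. X \<subseteq> Y \<longrightarrow> restrict (F Y) X = F X)}"

end

theory Submission
  imports Defs
begin

(* Call a polynomial f over the variables A a relation if peval f = 0,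
   i.e. f lies in the ideal I_A of the tautological presentation by X = A.
   (1) Every valuation v lies on the tropical hypersurface of every relation: if one monomial
       of f had strictly largest value, it would equal minus the sum of the other terms, whose
       value is strictly smaller by the ultrametric inequality.
   (2) Conversely, a point q of Q^A on the hypersurfaces of all relations is a valuation: the
       axioms are read off from the relations [0], [phi c] - c, [ab] - [a][b] and
       [a+b] - [a] - [b], where [a] denotes the variable a.
   Hence V_Q(A) = tr_Q(I_A).  As I_X is contained in I_Y for X \<subseteq> Y, restriction maps
   tr_Q(I_Y) into tr_Q(I_X); this gives the first claim and shows that v |-> (v|_X)_X lands in
   the inverse limit.  Since the index set of generating sets has the top element A, a
   compatible family is determined by its A-component, which yields the bijection. *)

text \<open>The value of the monomial with exponent vector m at the point g of a commutative monoid;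
  both the presentation map and the tropical pairing are instances of it.\<close>
definition mono_eval :: "('b \<Rightarrow> 'c::comm_monoid_mult) \<Rightarrow> ('b \<Rightarrow>\<^sub>0 nat) \<Rightarrow> 'c" where
  "mono_eval g m = (\<Prod>x\<in>Poly_Mapping.keys m. g x ^ Poly_Mapping.lookup m x)"

lemma mono_eval_superset:
  assumes "finite S" "Poly_Mapping.keys m \<subseteq> S"
  shows "mono_eval g m = (\<Prod>x\<in>S. g x ^ Poly_Mapping.lookup m x)"
  unfolding mono_eval_def
  by (rule prod.mono_neutral_left) (use assms in \<open>auto simp: in_keys_iff\<close>)

lemma mono_eval_add: "mono_eval g (m + n) = mono_eval g m * mono_eval g n"
proof -
  let ?S = "Poly_Mapping.keys m \<union> Poly_Mapping.keys n"
  have "mono_eval g (m + n) = (\<Prod>x\<in>?S. g x ^ Poly_Mapping.lookup (m + n) x)"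
    by (rule mono_eval_superset) (simp_all add: keys_add)
  also have "\<dots> = (\<Prod>x\<in>?S. g x ^ Poly_Mapping.lookup m x) * (\<Prod>x\<in>?S. g x ^ Poly_Mapping.lookup n x)"
    by (simp add: lookup_add power_add prod.distrib)
  also have "\<dots> = mono_eval g m * mono_eval g n"
    using mono_eval_superset[of ?S m g] mono_eval_superset[of ?S n g] by simp
  finally show ?thesis .
qed

lemma mono_eval_single [simp]: "mono_eval g (Poly_Mapping.single a k) = g a ^ k"
  unfolding mono_eval_def by simp

lemma mono_eval_zero [simp]: "mono_eval g 0 = 1"
  unfolding mono_eval_def by simp

lemma mono_eval_cong:
  "(\<And>x. x \<in> Poly_Mapping.keys m \<Longrightarrow> g x = h x) \<Longrightarrow> mono_eval g m = mono_eval h m"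
  unfolding mono_eval_def by (rule prod.cong) auto

lemma tpair_eq_mono_eval: "tpair m q = mono_eval q m"
  unfolding tpair_def mono_eval_def ..

abbreviation var :: "'a \<Rightarrow> ('a \<Rightarrow>\<^sub>0 nat)" where
  "var a \<equiv> Poly_Mapping.single a 1"

lemma single_eq_zero_iff [simp]: "Poly_Mapping.single a k = 0 \<longleftrightarrow> k = 0"
  by (metis lookup_single_eq lookup_zero single_zero)

lemma single_eq_single_iff [simp]:
  "Poly_Mapping.single a k = Poly_Mapping.single b k \<longleftrightarrow> a = b \<or> k = 0"
  by (metis lookup_single_eq lookup_single_not_eq single_zero)

lemma var_neq_add_var: "var c \<noteq> var a + var b"
proof
  assume eq: "var c = var a + var b"
  then have "Poly_Mapping.lookup (var c) a = Poly_Mapping.lookup (var a + var b) a"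
    and "Poly_Mapping.lookup (var c) b = Poly_Mapping.lookup (var a + var b) b"
    by simp_all
  then show False
    by (auto simp: lookup_add lookup_single when_def split: if_splits)
qed

lemma keys_single_add:
  assumes "m \<notin> Poly_Mapping.keys g" "c \<noteq> 0"
  shows "Poly_Mapping.keys (Poly_Mapping.single m c + g) = insert m (Poly_Mapping.keys g)"
  using assms by (auto simp: in_keys_iff lookup_add lookup_single when_def split: if_splits)

lemma calg_hom_zero: "calg_hom \<phi> \<Longrightarrow> \<phi> 0 = 0"
  unfolding calg_hom_def by (metis add.right_neutral add_left_cancel)

lemma calg_hom_uminus: "calg_hom \<phi> \<Longrightarrow> \<phi> (- c) = - \<phi> c"
  using calg_hom_zero[of \<phi>] unfolding calg_hom_def by (metis add.right_inverse add_eq_0_iff2)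

lemma peval_superset:
  assumes "calg_hom \<phi>" "finite S" "Poly_Mapping.keys p \<subseteq> S"
  shows "peval \<phi> p = (\<Sum>m\<in>S. \<phi> (Poly_Mapping.lookup p m) * mono_eval id m)"
  unfolding peval_def mono_eval_def id_def
  by (rule sum.mono_neutral_left) (use assms calg_hom_zero[OF assms(1)] in \<open>auto simp: in_keys_iff\<close>)

lemma peval_add:
  assumes "calg_hom \<phi>"
  shows "peval \<phi> (p + q) = peval \<phi> p + peval \<phi> q"
proof -
  let ?S = "Poly_Mapping.keys p \<union> Poly_Mapping.keys q"
  have "peval \<phi> (p + q) = (\<Sum>m\<in>?S. \<phi> (Poly_Mapping.lookup (p + q) m) * mono_eval id m)"
    by (rule peval_superset[OF assms]) (simp_all add: keys_add)
  also have "\<dots> = (\<Sum>m\<in>?S. \<phi> (Poly_Mapping.lookup p m) * mono_eval id m)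
                 + (\<Sum>m\<in>?S. \<phi> (Poly_Mapping.lookup q m) * mono_eval id m)"
    using assms by (simp add: lookup_add calg_hom_def distrib_right sum.distrib)
  also have "\<dots> = peval \<phi> p + peval \<phi> q"
    using peval_superset[OF assms, of ?S p] peval_superset[OF assms, of ?S q] by simp
  finally show ?thesis .
qed

lemma peval_single:
  "calg_hom \<phi> \<Longrightarrow> peval \<phi> (Poly_Mapping.single m c) = \<phi> c * mono_eval id m"
  using peval_superset[of \<phi> "{m}" "Poly_Mapping.single m c"] by simp

lemma trop_le_MInf_iff [simp]: "x \<le> MInf \<longleftrightarrow> x = MInf"
  by (cases x) auto

lemma tpair_le_trop_eval: "m \<in> Poly_Mapping.keys f \<Longrightarrow> tpair m q \<le> trop_eval f q"
  unfolding trop_eval_def by auto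

lemma trop_hyp_dominated:
  assumes "q \<in> trop_hyp f" "m \<in> Poly_Mapping.keys f" "tpair m q \<noteq> MInf"
  shows "\<exists>m'\<in>Poly_Mapping.keys f. m' \<noteq> m \<and> tpair m q \<le> tpair m' q"
proof -
  have le: "tpair m q \<le> trop_eval f q"
    using assms(2) by (rule tpair_le_trop_eval)
  with assms(3) have "trop_eval f q \<noteq> MInf"
    by auto
  with assms(1) obtain m1 m2 where "m1 \<in> Poly_Mapping.keys f" "m2 \<in> Poly_Mapping.keys f" "m1 \<noteq> m2"
    "tpair m1 q = trop_eval f q" "tpair m2 q = trop_eval f q"
    unfolding trop_hyp_def by blast
  with le show ?thesis
    by metis
qed

lemma trop_hyp_binomial:
  assumes "q \<in> trop_hyp f" "Poly_Mapping.keys f = {m1, m2}" "m1 \<noteq> m2"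
  shows "tpair m1 q = tpair m2 q"
  using assms(1) unfolding trop_hyp_def mem_Collect_eq
proof
  assume "trop_eval f q = MInf"
  then show ?thesis
    using tpair_le_trop_eval[of _ f q] assms(2) by (metis insertI1 insert_commute trop_le_MInf_iff)
next
  assume "\<exists>m\<in>Poly_Mapping.keys f. \<exists>m'\<in>Poly_Mapping.keys f. m \<noteq> m' \<and>
             tpair m q = trop_eval f q \<and> tpair m' q = trop_eval f q"
  then show ?thesis
    using assms(2) by auto
qed

lemma trop_hyp_cong:
  assumes "\<And>m. m \<in> Poly_Mapping.keys f \<Longrightarrow> tpair m q = tpair m q'"
  shows "q \<in> trop_hyp f \<longleftrightarrow> q' \<in> trop_hyp f"
proof -
  have "trop_eval f q = trop_eval f q'"
    unfolding trop_eval_def using assms by (simp cong: image_cong)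
  then show ?thesis
    unfolding trop_hyp_def using assms by auto
qed

text \<open>The transition maps of the inverse system are well defined: for X \<subseteq> Y we have
  I_X \<subseteq> I_Y, so restriction maps tr_Q(I_Y) into tr_Q(I_X).\<close>
lemma trop_var_restrict:
  assumes "X \<subseteq> Y" "q \<in> trop_var Y (pres_ideal \<phi> Y)"
  shows "restrict q X \<in> trop_var X (pres_ideal \<phi> X)"
  unfolding trop_var_def
proof (intro IntI INT_I)
  show "restrict q X \<in> X \<rightarrow>\<^sub>E UNIV"
    by simp
  fix f assume f: "f \<in> pres_ideal \<phi> X"
  then have keys_X: "Poly_Mapping.keys m \<subseteq> X" if "m \<in> Poly_Mapping.keys f" for m
    using that unfolding pres_ideal_def polys_in_def by blast
  from f assms have "q \<in> trop_hyp f"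
    unfolding pres_ideal_def polys_in_def trop_var_def by blast
  moreover have "tpair m (restrict q X) = tpair m q" if "m \<in> Poly_Mapping.keys f" for m
    unfolding tpair_eq_mono_eval using keys_X[OF that] by (intro mono_eval_cong) auto
  ultimately show "restrict q X \<in> trop_hyp f"
    using trop_hyp_cong by blast
qed

lemma trop_var_UNIV_iff:
  "q \<in> trop_var UNIV (pres_ideal \<phi> UNIV) \<longleftrightarrow> (\<forall>f. peval \<phi> f = 0 \<longrightarrow> q \<in> trop_hyp f)"
  unfolding trop_var_def pres_ideal_def polys_in_def by auto

section \<open>Valuations are points of tr_Q(I_A)\<close>

lemma
  assumes "valuation \<phi> v"
  shows valuation_mult: "v (a * b) = v a * v b"
    and valuation_add: "v (a + b) \<le> max (v a) (v b)"
    and valuation_zero: "v 0 = MInf"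
    and valuation_const: "c \<noteq> 0 \<Longrightarrow> v (\<phi> c) = 1"
  using assms unfolding valuation_def by blast+

lemma valuation_one: "calg_hom \<phi> \<Longrightarrow> valuation \<phi> v \<Longrightarrow> v 1 = 1"
  using valuation_const[of \<phi> v 1] by (simp add: calg_hom_def)

lemma valuation_uminus:
  assumes "calg_hom \<phi>" "valuation \<phi> v"
  shows "v (- x) = v x"
proof -
  have "v (- 1) = 1"
    using valuation_const[OF assms(2), of "- 1"] assms(1) by (simp add: calg_hom_uminus calg_hom_def)
  then show ?thesis
    using valuation_mult[OF assms(2), of "- 1" x] by simp
qed

lemma valuation_mono_eval:
  assumes "calg_hom \<phi>" "valuation \<phi> v"
  shows "v (mono_eval id m) = mono_eval v m"
proof -
  note one = valuation_one[OF assms] and mult = valuation_mult[OF assms(2)]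
  have pow: "v (x ^ k) = v x ^ k" for x k
    by (induction k) (simp_all add: one mult)
  have "v (\<Prod>x\<in>S. f x) = (\<Prod>x\<in>S. v (f x))" for S and f :: "'a \<Rightarrow> 'a"
    by (induction S rule: infinite_finite_induct) (simp_all add: one mult)
  with pow show ?thesis
    unfolding mono_eval_def by simp
qed

lemma valuation_sum_less:
  assumes "valuation \<phi> v" "T \<noteq> MInf" "\<And>m. m \<in> S \<Longrightarrow> v (g m) < T"
  shows "v (sum g S) < T"
  using assms(3)
proof (induction S rule: infinite_finite_induct)
  case (insert x F)
  then have "max (v (g x)) (v (sum g F)) < T"
    by simp
  moreover have "v (sum g (insert x F)) \<le> max (v (g x)) (v (sum g F))"
    using insert valuation_add[OF assms(1)] by simp
  ultimately show ?case
    by (rule le_less_trans[rotated])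
qed (use valuation_zero[OF assms(1)] assms(2) in \<open>simp_all add: less_trop_def\<close>)

lemma valuation_trop_hyp:
  assumes calg: "calg_hom \<phi>" and val: "valuation \<phi> v" and rel: "peval \<phi> f = 0"
  shows "v \<in> trop_hyp f"
proof (rule ccontr)
  assume off: "v \<notin> trop_hyp f"
  let ?K = "Poly_Mapping.keys f" and ?T = "trop_eval f v"
  have finite_T: "?T \<noteq> MInf"
    using off unfolding trop_hyp_def by blast
  then have "?K \<noteq> {}" and "?T = Max ((\<lambda>m. tpair m v) ` ?K)"
    unfolding trop_eval_def by (auto split: if_splits)
  then obtain m1 where m1: "m1 \<in> ?K" "tpair m1 v = ?T"
    by (metis (no_types, lifting) Max_in finite_imageI finite_keys image_iff image_is_empty)
  have others_less: "tpair m v < ?T" if "m \<in> ?K - {m1}" for m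
    using that tpair_le_trop_eval[of m f v] off m1 unfolding trop_hyp_def by fastforce
  define t where "t m = \<phi> (Poly_Mapping.lookup f m) * mono_eval id m" for m
  have val_t: "v (t m) = tpair m v" if "m \<in> ?K" for m
    using that val valuation_mono_eval[OF calg val]
    by (simp add: valuation_mult valuation_const t_def tpair_eq_mono_eval in_keys_iff)
  have "t m1 + sum t (?K - {m1}) = 0"
    using rel m1(1) peval_superset[OF calg, of ?K f] by (simp add: t_def sum.remove)
  then have "v (t m1) = v (sum t (?K - {m1}))"
    using valuation_uminus[OF calg val] by (metis add_eq_0_iff)
  moreover have "v (sum t (?K - {m1})) < ?T"
    using val finite_T by (rule valuation_sum_less) (use others_less val_t in auto)
  ultimately show False
    using val_t[OF m1(1)] m1(2) by simp
qed

section \<open>Points of tr_Q(I_A) are valuations\<close>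

text \<open>Step (2).  Throughout, q is a point on the hypersurface of every relation of A, and
  each valuation axiom is extracted from one explicit relation.\<close>
context
  fixes \<phi> :: "complex \<Rightarrow> 'a::comm_ring_1" and q :: "'a \<Rightarrow> 'q::linordered_ab_group_add trop"
  assumes calg: "calg_hom \<phi>"
    and on_relations: "\<And>f. peval \<phi> f = 0 \<Longrightarrow> q \<in> trop_hyp f"
begin

lemma binomial_relation:
  assumes "m1 \<noteq> m2" "c1 \<noteq> 0" "c2 \<noteq> 0"
    and "\<phi> c1 * mono_eval id m1 + \<phi> c2 * mono_eval id m2 = 0"
  shows "mono_eval q m1 = mono_eval q m2"
proof -
  let ?f = "Poly_Mapping.single m1 c1 + Poly_Mapping.single m2 c2"
  have "q \<in> trop_hyp ?f"
    using assms(4) by (intro on_relations) (simp add: peval_add[OF calg] peval_single[OF calg])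
  moreover have "Poly_Mapping.keys ?f = {m1, m2}"
    using assms(1-3) by (simp add: keys_single_add)
  ultimately show ?thesis
    using trop_hyp_binomial assms(1) by (metis tpair_eq_mono_eval)
qed

text \<open>The relation [0] = 0.\<close>
lemma relations_zero: "q 0 = MInf"
proof (rule ccontr)
  assume "q 0 \<noteq> MInf"
  moreover have "q \<in> trop_hyp (Poly_Mapping.single (var 0) 1)"
    using calg by (intro on_relations) (simp add: peval_single)
  ultimately show False
    using trop_hyp_dominated[of q "Poly_Mapping.single (var 0) (1::complex)" "var 0"]
    by (simp add: tpair_eq_mono_eval)
qed

text \<open>The relation [\<phi> c] - c = 0.\<close>
lemma relations_const: "c \<noteq> 0 \<Longrightarrow> q (\<phi> c) = 1"
  using binomial_relation[of "var (\<phi> c)" 0 1 "- c"] calg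
  by (simp add: calg_hom_uminus calg_hom_def)

text \<open>The relation [ab] - [a][b] = 0.\<close>
lemma relations_mult: "q (a * b) = q a * q b"
  using binomial_relation[of "var (a * b)" "var a + var b" 1 "- 1"] var_neq_add_var[of "a * b" a b] calg
  by (simp add: mono_eval_add calg_hom_uminus calg_hom_def)

text \<open>The relation [a+b] - [a] - [b] = 0.\<close>
lemma relations_ultrametric: "q (a + b) \<le> max (q a) (q b)"
proof (cases "a + b = a \<or> a + b = b \<or> q (a + b) = MInf")
  case False
  let ?g = "Poly_Mapping.single (var a) (- 1) + Poly_Mapping.single (var b) (- 1 :: complex)"
  let ?f = "Poly_Mapping.single (var (a + b)) 1 + ?g"
  have keys_g: "Poly_Mapping.keys ?g \<subseteq> {var a, var b}"
    using keys_add[of "Poly_Mapping.single (var a) (- 1)" "Poly_Mapping.single (var b) (- 1 :: complex)"]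
    by auto
  with False have keys_f: "Poly_Mapping.keys ?f = insert (var (a + b)) (Poly_Mapping.keys ?g)"
    by (intro keys_single_add) auto
  have "q \<in> trop_hyp ?f"
    using calg by (intro on_relations) (simp add: peval_add peval_single calg_hom_uminus calg_hom_def)
  then obtain m' where "m' \<in> Poly_Mapping.keys ?f" "m' \<noteq> var (a + b)" "q (a + b) \<le> tpair m' q"
    using trop_hyp_dominated[of q ?f "var (a + b)"] keys_f False by (auto simp: tpair_eq_mono_eval)
  with keys_f keys_g show ?thesis
    by (auto simp: tpair_eq_mono_eval le_max_iff_disj)
qed auto

lemma relations_valuation: "valuation \<phi> q"
  unfolding valuation_def
  using relations_mult relations_ultrametric relations_zero relations_const by blast

end

lemma valuations_eq_trop_var_UNIV:
  fixes \<phi> :: "complex \<Rightarrow> 'a::comm_ring_1"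
  assumes "calg_hom \<phi>"
  shows "valuations \<phi> = (trop_var UNIV (pres_ideal \<phi> UNIV) :: ('a \<Rightarrow> 'q::linordered_ab_group_add trop) set)"
proof (intro set_eqI iffI)
  fix v :: "'a \<Rightarrow> 'q trop"
  show "v \<in> valuations \<phi> \<Longrightarrow> v \<in> trop_var UNIV (pres_ideal \<phi> UNIV)"
    unfolding valuations_def trop_var_UNIV_iff using valuation_trop_hyp[OF assms] by blast
  show "v \<in> trop_var UNIV (pres_ideal \<phi> UNIV) \<Longrightarrow> v \<in> valuations \<phi>"
    unfolding valuations_def trop_var_UNIV_iff using relations_valuation[OF assms] by blast
qed

text \<open>The whole algebra generates itself: a = peval [a].\<close>
lemma UNIV_in_gensets:
  fixes \<phi> :: "complex \<Rightarrow> 'a::comm_ring_1"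
  assumes "calg_hom \<phi>"
  shows "UNIV \<in> gensets \<phi>"
proof -
  have "peval \<phi> (Poly_Mapping.single (var a) 1) = a" for a
    using assms by (simp add: peval_single calg_hom_def)
  then have "surj (peval \<phi>)"
    by (rule surjI)
  moreover have "polys_in (UNIV :: 'a set) = UNIV"
    unfolding polys_in_def by blast
  ultimately show ?thesis
    unfolding gensets_def generating_def by simp
qed

lemma restrictions_in_inv_lim:
  assumes "q \<in> trop_var UNIV (pres_ideal \<phi> UNIV)"
  shows "(\<lambda>X\<in>gensets \<phi>. piX X q) \<in> inv_lim \<phi>"
  unfolding inv_lim_def
proof (intro CollectI conjI ballI impI)
  show "(\<lambda>X\<in>gensets \<phi>. piX X q) \<in> gensets \<phi> \<rightarrow>\<^sub>E UNIV"
    by simp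
  fix X assume X: "X \<in> gensets \<phi>"
  then show "(\<lambda>X\<in>gensets \<phi>. piX X q) X \<in> trop_var X (pres_ideal \<phi> X)"
    using trop_var_restrict[OF subset_UNIV assms] by (simp add: piX_def)
  fix Y assume "Y \<in> gensets \<phi>" "X \<subseteq> Y"
  with X show "restrict ((\<lambda>X\<in>gensets \<phi>. piX X q) Y) X = (\<lambda>X\<in>gensets \<phi>. piX X q) X"
    by (simp add: piX_def Int_absorb1)
qed

lemma inv_lim_memD:
  assumes "F \<in> inv_lim \<phi>"
  shows "F \<in> gensets \<phi> \<rightarrow>\<^sub>E UNIV"
    and "X \<in> gensets \<phi> \<Longrightarrow> F X \<in> trop_var X (pres_ideal \<phi> X)"
    and "X \<in> gensets \<phi> \<Longrightarrow> Y \<in> gensets \<phi> \<Longrightarrow> X \<subseteq> Y \<Longrightarrow> restrict (F Y) X = F X"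
proof -
  have P: "F \<in> gensets \<phi> \<rightarrow>\<^sub>E UNIV \<and> (\<forall>X\<in>gensets \<phi>. F X \<in> trop_var X (pres_ideal \<phi> X)) \<and>
      (\<forall>X\<in>gensets \<phi>. \<forall>Y\<in>gensets \<phi>. X \<subseteq> Y \<longrightarrow> restrict (F Y) X = F X)"
    using assms unfolding inv_lim_def by (rule CollectD)
  then show "F \<in> gensets \<phi> \<rightarrow>\<^sub>E UNIV"
    by (rule conjunct1)
  show "X \<in> gensets \<phi> \<Longrightarrow> F X \<in> trop_var X (pres_ideal \<phi> X)"
    using P by (simp only: Ball_def)
  show "X \<in> gensets \<phi> \<Longrightarrow> Y \<in> gensets \<phi> \<Longrightarrow> X \<subseteq> Y \<Longrightarrow> restrict (F Y) X = F X"
    using P by (simp only: Ball_def)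
qed

text \<open>Since A is the largest generating set, a compatible family is determined by its
  A-component.\<close>
lemma inv_lim_top_component:
  assumes "calg_hom \<phi>" "F \<in> inv_lim \<phi>"
  shows "F UNIV \<in> trop_var UNIV (pres_ideal \<phi> UNIV)"
    and "(\<lambda>X\<in>gensets \<phi>. piX X (F UNIV)) = F"
proof -
  have top: "UNIV \<in> gensets \<phi>"
    using assms(1) by (rule UNIV_in_gensets)
  with assms(2) show "F UNIV \<in> trop_var UNIV (pres_ideal \<phi> UNIV)"
    by (rule inv_lim_memD(2))
  show "(\<lambda>X\<in>gensets \<phi>. piX X (F UNIV)) = F"
  proof
    fix X
    show "(\<lambda>X\<in>gensets \<phi>. piX X (F UNIV)) X = F X"
    proof (cases "X \<in> gensets \<phi>")
      case True
      then show ?thesis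
        using inv_lim_memD(3)[OF assms(2) True top] by (simp add: piX_def)
    next
      case False
      then show ?thesis
        using PiE_arb[OF inv_lim_memD(1)[OF assms(2)] False] by simp
    qed
  qed
qed

theorem theorem2p1:
  fixes \<phi> :: "complex \<Rightarrow> 'a::comm_ring_1"
  assumes "calg_hom \<phi>"
  shows "(\<forall>X. generating \<phi> X \<longrightarrow>
            (\<forall>v \<in> (valuations \<phi> :: ('a \<Rightarrow> 'q::linordered_ab_group_add trop) set).
               piX X v \<in> trop_var X (pres_ideal \<phi> X)))
       \<and> bij_betw (\<lambda>v. \<lambda>X\<in>gensets \<phi>. piX X v)
           (valuations \<phi> :: ('a \<Rightarrow> 'q::linordered_ab_group_add trop) set) (inv_lim \<phi>)"
proof
  have V: "valuations \<phi> = (trop_var UNIV (pres_ideal \<phi> UNIV) :: ('a \<Rightarrow> 'q trop) set)"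
    using assms by (rule valuations_eq_trop_var_UNIV)
  show "\<forall>X. generating \<phi> X \<longrightarrow> (\<forall>v \<in> (valuations \<phi> :: ('a \<Rightarrow> 'q trop) set).
          piX X v \<in> trop_var X (pres_ideal \<phi> X))"
    unfolding V piX_def using trop_var_restrict[OF subset_UNIV] by blast
  show "bij_betw (\<lambda>v. \<lambda>X\<in>gensets \<phi>. piX X v) (valuations \<phi> :: ('a \<Rightarrow> 'q trop) set) (inv_lim \<phi>)"
    unfolding V
  proof (rule bij_betw_byWitness[where f' = "\<lambda>F. F UNIV"])
    show "\<forall>v \<in> trop_var UNIV (pres_ideal \<phi> UNIV). (\<lambda>X\<in>gensets \<phi>. piX X v) UNIV = v"
      using UNIV_in_gensets[OF assms] by (simp add: piX_def restrict_UNIV)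
    show "\<forall>F \<in> inv_lim \<phi>. (\<lambda>X\<in>gensets \<phi>. piX X (F UNIV)) = F"
      using inv_lim_top_component(2)[OF assms] by blast
    show "(\<lambda>v. \<lambda>X\<in>gensets \<phi>. piX X v) ` trop_var UNIV (pres_ideal \<phi> UNIV) \<subseteq> inv_lim \<phi>"
      using restrictions_in_inv_lim by blast
    show "(\<lambda>F. F UNIV) ` inv_lim \<phi> \<subseteq> (trop_var UNIV (pres_ideal \<phi> UNIV) :: ('a \<Rightarrow> 'q trop) set)"
      using inv_lim_top_component(1)[OF assms] by blast
  qed
qed

end
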